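(* Let $\Bbbk$ be a field with $\mathrm{char}(\Bbbk)\ne2$, $n\ge2$, $\mathbb{H}_{2^n}$ the Nichols Hopf algebra and $A$ a unital associative $\Bbbk$-algebra. Let $\cdot:\mathbb{H}_{2^n}\otimes A\to A$ be a linear map such that $1\cdot a=a$ and $g\cdot a=0$ for all $a\in A$, $x_i\cdot1_A\in Z(A)$ for all $i\in\{1,\dots,n-1\}$, and for all $a\in A$: $gx_i\cdot a=x_i\cdot a=(x_i\cdot1_A)a$ for $i\in\{1,\dots,n-1\}$, and $gx_{i_1}\cdots x_{i_s}\cdot a=x_{i_1}\cdots x_{i_s}\cdot a=0$ for all $s\ge2$, $i_1,\dots,i_s\in\{1,\dots,n-1\}$. Then $\cdot$ is a partial action of $\mathbb{H}_{2^n}$ on $A$.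
   Context: $\mathbb{H}_{2^n}$ is the Hopf algebra generated by $g,x_1,\dots,x_{n-1}$ with relations $g^2=1$, $x_i^2=0$, $x_ig=-gx_i$, $x_ix_j=-x_jx_i$, basis $\{g^{j_0}x_1^{j_1}\cdots x_{n-1}^{j_{n-1}}:j_i\in\{0,1\}\}$, $g$ group-like, $\Delta(x_i)=x_i\otimes1+g\otimes x_i$, $\varepsilon(x_i)=0$. $Z(A)$ is the center of $A$. A partial action of a bialgebra $H$ on $A$ is a linear map $\cdot:H\otimes A\to A$ with $1_H\cdot a=a$, $h\cdot(ab)=(h_1\cdot a)(h_2\cdot b)$, $h\cdot(k\cdot a)=(h_1\cdot1_A)(h_2k\cdot a)$. *)

theory Defs
  imports Main
begin

definition is_algebra :: "('k::field \<Rightarrow> 'a::ring_1 \<Rightarrow> 'a) \<Rightarrow> bool" where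
  "is_algebra scale \<longleftrightarrow>
     (\<forall>c x y. scale c (x + y) = scale c x + scale c y) \<and>
     (\<forall>c d x. scale (c + d) x = scale c x + scale d x) \<and>
     (\<forall>c d x. scale c (scale d x) = scale (c * d) x) \<and>
     (\<forall>x. scale 1 x = x) \<and>
     (\<forall>c x y. scale c (x * y) = scale c x * y) \<and>
     (\<forall>c x y. scale c (x * y) = x * scale c y)"

text \<open>Basis of the Nichols Hopf algebra H_{2^n}: the pair (b, S) stands for
  g^b x_{i_1} ... x_{i_s} with S = {i_1 < ... < i_s} a subset of {1..n-1}.\<close>

type_synonym hbasis = "bool \<times> nat set"

definition Hbasis :: "nat \<Rightarrow> hbasis set" where
  "Hbasis n = {(b, S). S \<subseteq> {1..<n}}"

definition Hspace :: "nat \<Rightarrow> (hbasis \<Rightarrow> 'k::field) set" where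
  "Hspace n = {h. \<forall>r. r \<notin> Hbasis n \<longrightarrow> h r = 0}"

definition He :: "hbasis \<Rightarrow> hbasis \<Rightarrow> 'k::field" where
  "He p = (\<lambda>r. if r = p then 1 else 0)"

text \<open>Structure constants: (g^b x_S)(g^c x_T) = (-1)^(c|S|) g^(b+c) x_S x_T, and
  x_S x_T = 0 if S, T intersect, else (-1)^(#{(s,t) in S x T. t < s}) x_(S \<union> T).\<close>

definition Hcoef :: "hbasis \<Rightarrow> hbasis \<Rightarrow> hbasis \<Rightarrow> 'k::field" where
  "Hcoef p q r = (case p of (b, S) \<Rightarrow> case q of (c, T) \<Rightarrow>
     if S \<inter> T = {} \<and> r = (b \<noteq> c, S \<union> T)
     then (-1) ^ (of_bool c * card S + card {(s, t). s \<in> S \<and> t \<in> T \<and> t < s})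
     else 0)"

definition Hmul :: "nat \<Rightarrow> (hbasis \<Rightarrow> 'k::field) \<Rightarrow> (hbasis \<Rightarrow> 'k) \<Rightarrow> hbasis \<Rightarrow> 'k" where
  "Hmul n h k = (\<lambda>r. \<Sum>p\<in>Hbasis n. \<Sum>q\<in>Hbasis n. h p * k q * Hcoef p q r)"

definition Hone :: "hbasis \<Rightarrow> 'k::field" where "Hone = He (False, {})"
definition Hg :: "hbasis \<Rightarrow> 'k::field" where "Hg = He (True, {})"
definition Hx :: "nat \<Rightarrow> hbasis \<Rightarrow> 'k::field" where "Hx i = He (False, {i})"

definition Hprod :: "nat \<Rightarrow> (hbasis \<Rightarrow> 'k::field) list \<Rightarrow> hbasis \<Rightarrow> 'k" where
  "Hprod n hs = foldl (Hmul n) Hone hs"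

text \<open>The tensor square H \<otimes> H with the tensor product algebra structure
  (a \<otimes> b)(c \<otimes> d) = ac \<otimes> bd.\<close>

definition Tmul :: "nat \<Rightarrow> (hbasis \<times> hbasis \<Rightarrow> 'k::field) \<Rightarrow> (hbasis \<times> hbasis \<Rightarrow> 'k)
    \<Rightarrow> hbasis \<times> hbasis \<Rightarrow> 'k" where
  "Tmul n u v = (\<lambda>(r1, r2). \<Sum>p1\<in>Hbasis n. \<Sum>p2\<in>Hbasis n. \<Sum>q1\<in>Hbasis n. \<Sum>q2\<in>Hbasis n.
      u (p1, p2) * v (q1, q2) * Hcoef p1 q1 r1 * Hcoef p2 q2 r2)"

definition Tpure :: "(hbasis \<Rightarrow> 'k::field) \<Rightarrow> (hbasis \<Rightarrow> 'k) \<Rightarrow> hbasis \<times> hbasis \<Rightarrow> 'k" where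
  "Tpure h k = (\<lambda>(p, q). h p * k q)"

definition Tplus :: "(hbasis \<times> hbasis \<Rightarrow> 'k::field) \<Rightarrow> (hbasis \<times> hbasis \<Rightarrow> 'k) \<Rightarrow> hbasis \<times> hbasis \<Rightarrow> 'k" where
  "Tplus u v = (\<lambda>r. u r + v r)"

text \<open>Comultiplication: Delta(g) = g \<otimes> g, Delta(x_i) = x_i \<otimes> 1 + g \<otimes> x_i,
  extended multiplicatively: Delta(g^b x_{i_1}...x_{i_s}) = Delta(g)^b Delta(x_{i_1})...Delta(x_{i_s}),
  then linearly.\<close>

definition Delta_basis :: "nat \<Rightarrow> hbasis \<Rightarrow> hbasis \<times> hbasis \<Rightarrow> 'k::field" where
  "Delta_basis n p = (case p of (b, S) \<Rightarrow>
     foldl (Tmul n) (if b then Tpure Hg Hg else Tpure Hone Hone)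
       (map (\<lambda>i. Tplus (Tpure (Hx i) Hone) (Tpure Hg (Hx i))) (sorted_list_of_set S)))"

definition Delta :: "nat \<Rightarrow> (hbasis \<Rightarrow> 'k::field) \<Rightarrow> hbasis \<times> hbasis \<Rightarrow> 'k" where
  "Delta n h = (\<lambda>pq. \<Sum>p\<in>Hbasis n. h p * Delta_basis n p pq)"

text \<open>A linear map H \<otimes> A \<rightarrow> A is given by linear maps phi p : A \<rightarrow> A on basis elements p;
  act n scale phi h a is its value on h \<otimes> a.\<close>

definition act :: "nat \<Rightarrow> ('k::field \<Rightarrow> 'a::ring_1 \<Rightarrow> 'a) \<Rightarrow> (hbasis \<Rightarrow> 'a \<Rightarrow> 'a)
    \<Rightarrow> (hbasis \<Rightarrow> 'k) \<Rightarrow> 'a \<Rightarrow> 'a" where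
  "act n scale phi h a = (\<Sum>p\<in>Hbasis n. scale (h p) (phi p a))"

definition linear_map_HA :: "nat \<Rightarrow> ('k::field \<Rightarrow> 'a::ring_1 \<Rightarrow> 'a) \<Rightarrow> (hbasis \<Rightarrow> 'a \<Rightarrow> 'a) \<Rightarrow> bool" where
  "linear_map_HA n scale phi \<longleftrightarrow>
     (\<forall>p\<in>Hbasis n. (\<forall>x y. phi p (x + y) = phi p x + phi p y) \<and>
                    (\<forall>c x. phi p (scale c x) = scale c (phi p x)))"

text \<open>Partial action (Sweedler sums written out via the coefficients of Delta h).\<close>

definition partial_action :: "nat \<Rightarrow> ('k::field \<Rightarrow> 'a::ring_1 \<Rightarrow> 'a) \<Rightarrow> (hbasis \<Rightarrow> 'a \<Rightarrow> 'a) \<Rightarrow> bool" where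
  "partial_action n scale phi \<longleftrightarrow>
     linear_map_HA n scale phi \<and>
     (\<forall>a. act n scale phi Hone a = a) \<and>
     (\<forall>h\<in>Hspace n. \<forall>a b. act n scale phi h (a * b) =
        (\<Sum>p\<in>Hbasis n. \<Sum>q\<in>Hbasis n.
           scale (Delta n h (p, q)) (act n scale phi (He p) a * act n scale phi (He q) b))) \<and>
     (\<forall>h\<in>Hspace n. \<forall>k\<in>Hspace n. \<forall>a. act n scale phi h (act n scale phi k a) =
        (\<Sum>p\<in>Hbasis n. \<Sum>q\<in>Hbasis n.
           scale (Delta n h (p, q)) (act n scale phi (He p) 1 * act n scale phi (Hmul n (He q) k) a)))"

end

theory Submission
  imports Defs
begin

(* The hypotheses determine phi completely: on the basis g^b x_S it is the identity for the
   unit, zero for g, left multiplication by the central element c_i = x_i . 1 for x_i and g x_i,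
   and zero as soon as |S| >= 2.  Both partial action axioms are linear in h (and in k), so it
   suffices to verify them for h = g^b x_S.  The comultiplication is graded: Delta(g^b x_S) is a
   combination of tensors p (x) q with |p| + |q| = |S|.  For |S| >= 3 every such term has a factor
   of degree >= 2 on which phi vanishes, so both sides are zero; the cases |S| <= 2 are a direct
   computation, in which the two mixed terms of Delta(x_i x_j) cancel because c_i and c_j are
   central. *)

lemma sum_eq_single:
  assumes "finite A" "a \<in> A" "\<And>x. x \<in> A \<Longrightarrow> x \<noteq> a \<Longrightarrow> f x = 0"
  shows "sum f A = f a"
  using sum.mono_neutral_right[of A "{a}" f] assms by auto

lemma finite_set_cases_card:
  assumes "finite S"
  obtains "S = {}" | i where "S = {i}" | "2 \<le> card S"
proof -
  consider "card S = 0" | "card S = 1" | "2 \<le> card S" by linarith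
  then show ?thesis using assms that by cases (auto simp: card_1_singleton_iff)
qed

lemma finite_linorder_set_cases_card:
  fixes S :: "'a::linorder set"
  assumes "finite S"
  obtains "S = {}" | i where "S = {i}" | i j where "i < j" "S = {i, j}" | "3 \<le> card S"
proof -
  consider "card S \<le> 1" | "card S = 2" | "3 \<le> card S" by linarith
  then show ?thesis
  proof cases
    case 1
    with assms show ?thesis
      by (cases rule: finite_set_cases_card) (use that(1,2) in auto)
  next
    case 2
    then obtain i j where "S = {i, j}" "i \<noteq> j" by (auto simp: card_2_iff)
    then show ?thesis using that(3)[of i j] that(3)[of j i] by (cases "i < j") (auto simp: insert_commute)
  qed (rule that(4))
qed

lemma Hbasis_iff [simp]: "(b, S) \<in> Hbasis n \<longleftrightarrow> S \<subseteq> {1..<n}"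
  by (simp add: Hbasis_def)

lemma finite_Hbasis: "finite (Hbasis n)"
proof -
  have "Hbasis n = UNIV \<times> Pow {1..<n}" by (auto simp: Hbasis_def)
  then show ?thesis by simp
qed

lemma finite_snd_Hbasis: "p \<in> Hbasis n \<Longrightarrow> finite (snd p)"
  by (cases p) (auto intro: finite_subset)

definition Hmul_idx :: "hbasis \<Rightarrow> hbasis \<Rightarrow> hbasis" where
  "Hmul_idx p q = (fst p \<noteq> fst q, snd p \<union> snd q)"

definition Hmul_sign :: "hbasis \<Rightarrow> hbasis \<Rightarrow> 'k::field" where
  "Hmul_sign p q =
    (-1) ^ (of_bool (fst q) * card (snd p) + card {(s, t). s \<in> snd p \<and> t \<in> snd q \<and> t < s})"

lemma Hcoef_eq:
  "Hcoef p q r = (if snd p \<inter> snd q = {} \<and> r = Hmul_idx p q then Hmul_sign p q else 0)"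
  by (cases p; cases q) (simp add: Hcoef_def Hmul_idx_def Hmul_sign_def)

lemma Hmul_idx_Hbasis: "p \<in> Hbasis n \<Longrightarrow> q \<in> Hbasis n \<Longrightarrow> Hmul_idx p q \<in> Hbasis n"
  by (cases p; cases q) (simp add: Hmul_idx_def)

lemma card_Hcoef_nonzero:
  "Hcoef p q r \<noteq> 0 \<Longrightarrow> p \<in> Hbasis n \<Longrightarrow> q \<in> Hbasis n \<Longrightarrow>
   card (snd r) = card (snd p) + card (snd q)"
  by (auto simp: Hcoef_eq Hmul_idx_def card_Un_disjoint finite_snd_Hbasis split: if_splits)

lemma sum_He_mult: "finite A \<Longrightarrow> (\<Sum>x\<in>A. He p x * f x) = (if p \<in> A then f p else 0)"
  unfolding He_def by (simp add: if_distrib[of "\<lambda>c. c * _"] eq_commute[of _ p] cong: if_cong)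

lemma Hmul_He_left:
  "q \<in> Hbasis n \<Longrightarrow> Hmul n (He q) k r = (\<Sum>q'\<in>Hbasis n. k q' * Hcoef q q' r)"
  unfolding Hmul_def by (simp add: mult.assoc sum_distrib_left[symmetric] sum_He_mult finite_Hbasis)

lemma Hmul_He: "p \<in> Hbasis n \<Longrightarrow> q \<in> Hbasis n \<Longrightarrow> Hmul n (He p) (He q) = Hcoef p q"
  by (rule ext) (simp only: Hmul_He_left sum_He_mult finite_Hbasis if_True)

lemma Hmul_Hg_He: "S \<subseteq> {1..<n} \<Longrightarrow> Hmul n Hg (He (False, S)) = He (True, S)"
  unfolding Hg_def by (subst Hmul_He) (auto simp: Hcoef_eq Hmul_idx_def Hmul_sign_def He_def)

lemma foldl_Hmul_Hx_sorted:
  "sorted_wrt (<) xs \<Longrightarrow> set xs \<subseteq> {1..<n} \<Longrightarrow> T \<subseteq> {1..<n} \<Longrightarrow> \<forall>t\<in>T. \<forall>x\<in>set xs. t < x \<Longrightarrow>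
   foldl (Hmul n) (He (False, T)) (map Hx xs) = (He (False, T \<union> set xs) :: _ \<Rightarrow> 'k::field)"
proof (induction xs arbitrary: T)
  case (Cons x xs)
  have no_inversions: "{(s, t). s \<in> T \<and> t = x \<and> t < s} = {}" and "x \<notin> T"
    using Cons.prems(4) by auto
  then have "Hmul n (He (False, T)) (Hx x) = (He (False, insert x T) :: _ \<Rightarrow> 'k)"
    using Cons.prems(2,3) unfolding Hx_def
    by (subst Hmul_He) (auto simp: Hcoef_eq Hmul_idx_def Hmul_sign_def He_def no_inversions)
  moreover have "foldl (Hmul n) (He (False, insert x T)) (map Hx xs) =
      (He (False, insert x T \<union> set xs) :: _ \<Rightarrow> 'k)"
    using Cons.prems by (intro Cons.IH) auto
  ultimately show ?case by simp
qed simp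

lemma Hprod_sorted_Hx:
  assumes "S \<subseteq> {1..<n}"
  shows "Hprod n (map Hx (sorted_list_of_set S)) = He (False, S)"
proof -
  have "finite S" using assms by (rule finite_subset) simp
  then show ?thesis
    using foldl_Hmul_Hx_sorted[of "sorted_list_of_set S" n "{}"] assms
    by (simp add: Hprod_def Hone_def)
qed

definition Tmono :: "'k::field \<Rightarrow> hbasis \<Rightarrow> hbasis \<Rightarrow> hbasis \<times> hbasis \<Rightarrow> 'k" where
  "Tmono c p q = (\<lambda>x. if x = (p, q) then c else 0)"

lemma Tpure_He: "Tpure (He p) (He q) = Tmono 1 p q"
  by (rule ext) (auto simp: Tpure_def Tmono_def He_def split: if_splits)

lemma Tmul_Tmono:
  assumes "p1 \<in> Hbasis n" "p2 \<in> Hbasis n" "q1 \<in> Hbasis n" "q2 \<in> Hbasis n"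
  shows "Tmul n (Tmono c p1 p2) (Tmono d q1 q2) =
    (if snd p1 \<inter> snd q1 = {} \<and> snd p2 \<inter> snd q2 = {}
     then Tmono (c * d * Hmul_sign p1 q1 * Hmul_sign p2 q2) (Hmul_idx p1 q1) (Hmul_idx p2 q2)
     else (\<lambda>_. 0))" (is "_ = ?rhs")
proof (rule ext, clarify)
  fix r1 r2
  have "Tmul n (Tmono c p1 p2) (Tmono d q1 q2) (r1, r2) = (\<Sum>q1'\<in>Hbasis n. \<Sum>q2'\<in>Hbasis n.
      c * Tmono d q1 q2 (q1', q2') * Hcoef p1 q1' r1 * Hcoef p2 q2' r2)"
    unfolding Tmul_def split_conv
    by (subst sum_eq_single[of _ p1], simp_all add: finite_Hbasis assms Tmono_def,
        subst sum_eq_single[of _ p2], simp_all add: finite_Hbasis assms)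
  also have "\<dots> = c * d * Hcoef p1 q1 r1 * Hcoef p2 q2 r2"
    by (subst sum_eq_single[of _ q1], simp_all add: finite_Hbasis assms Tmono_def,
        subst sum_eq_single[of _ q2], simp_all add: finite_Hbasis assms)
  finally show "Tmul n (Tmono c p1 p2) (Tmono d q1 q2) (r1, r2) = ?rhs (r1, r2)"
    by (auto simp: Tmono_def Hcoef_eq)
qed

lemma Tmul_Tplus_left: "Tmul n (Tplus u v) w = Tplus (Tmul n u w) (Tmul n v w)"
  by (rule ext) (simp add: Tmul_def Tplus_def algebra_simps sum.distrib split: prod.splits)

lemma Tmul_Tplus_right: "Tmul n w (Tplus u v) = Tplus (Tmul n w u) (Tmul n w v)"
  by (rule ext) (simp add: Tmul_def Tplus_def algebra_simps sum.distrib split: prod.splits)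

definition Delta_x :: "nat \<Rightarrow> hbasis \<times> hbasis \<Rightarrow> 'k::field" where
  "Delta_x i = Tplus (Tmono 1 (False, {i}) (False, {})) (Tmono 1 (True, {}) (False, {i}))"

lemma Delta_basis_eq:
  "Delta_basis n (b, S) = foldl (Tmul n) (Tmono 1 (b, {}) (b, {})) (map Delta_x (sorted_list_of_set S))"
proof -
  have unit: "(if b then Tpure Hg Hg else Tpure Hone Hone) = (Tmono 1 (b, {}) (b, {}) :: _ \<Rightarrow> 'k::field)"
    by (simp add: Hg_def Hone_def Tpure_He)
  have generator: "(\<lambda>i. Tplus (Tpure (Hx i) Hone) (Tpure Hg (Hx i))) = (Delta_x :: _ \<Rightarrow> _ \<Rightarrow> 'k::field)"
    by (rule ext) (simp add: Delta_x_def Hg_def Hone_def Hx_def Tpure_He)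
  show ?thesis unfolding Delta_basis_def prod.case unit generator ..
qed

lemma Delta_basis_empty: "Delta_basis n (b, {}) = Tmono 1 (b, {}) (b, {})"
  by (simp add: Delta_basis_eq)

lemma Delta_basis_singleton:
  "i \<in> {1..<n} \<Longrightarrow>
   Delta_basis n (b, {i}) = Tplus (Tmono 1 (b, {i}) (b, {})) (Tmono 1 (\<not> b, {}) (b, {i}))"
  by (simp add: Delta_basis_eq Delta_x_def Tmul_Tplus_left Tmul_Tplus_right Tmul_Tmono
      Hmul_idx_def Hmul_sign_def)

lemma Delta_basis_doubleton:
  assumes "i \<in> {1..<n}" "j \<in> {1..<n}" "i < j"
  shows "Delta_basis n (b, {i, j}) =
    Tplus (Tplus (Tmono 1 (b, {i, j}) (b, {})) (Tmono 1 (\<not> b, {j}) (b, {i})))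
          (Tplus (Tmono (-1) (\<not> b, {i}) (b, {j})) (Tmono 1 (b, {}) (b, {i, j})))"
proof -
  have "{i, j} = set [i, j]" by simp
  then have sorted: "sorted_list_of_set {i, j} = [i, j]"
    using \<open>i < j\<close> by (simp only: sorted_list_of_set_sort_remdups) simp
  have no_inversion: "{(s, t). s = i \<and> t = j \<and> t < s} = {}" using \<open>i < j\<close> by auto
  show ?thesis
    using assms by (simp add: sorted no_inversion Delta_basis_eq Delta_x_def Tmul_Tplus_left
        Tmul_Tplus_right Tmul_Tmono Hmul_idx_def Hmul_sign_def insert_commute)
qed

definition Thomogeneous :: "nat \<Rightarrow> (hbasis \<times> hbasis \<Rightarrow> 'k::field) \<Rightarrow> bool" where
  "Thomogeneous m u \<longleftrightarrow> (\<forall>r1 r2. u (r1, r2) \<noteq> 0 \<longrightarrow> card (snd r1) + card (snd r2) = m)"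

lemma Thomogeneous_Tmono: "Thomogeneous (card (snd p) + card (snd q)) (Tmono c p q)"
  by (auto simp: Thomogeneous_def Tmono_def split: if_splits)

lemma Thomogeneous_Tmul:
  fixes u v :: "hbasis \<times> hbasis \<Rightarrow> 'k::field"
  assumes u: "Thomogeneous m u" and v: "Thomogeneous m' v"
  shows "Thomogeneous (m + m') (Tmul n u v)"
  unfolding Thomogeneous_def
proof (intro allI impI)
  fix r1 r2 assume "Tmul n u v (r1, r2) \<noteq> 0"
  then obtain p1 p2 q1 q2 where mem: "p1 \<in> Hbasis n" "p2 \<in> Hbasis n" "q1 \<in> Hbasis n" "q2 \<in> Hbasis n"
    and nz: "u (p1, p2) * v (q1, q2) * Hcoef p1 q1 r1 * Hcoef p2 q2 r2 \<noteq> 0"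
    unfolding Tmul_def split_conv by (blast elim!: sum.not_neutral_contains_not_neutral)
  then have "u (p1, p2) \<noteq> 0" "v (q1, q2) \<noteq> 0" "Hcoef p1 q1 r1 \<noteq> (0::'k)" "Hcoef p2 q2 r2 \<noteq> (0::'k)"
    by simp_all
  moreover have "card (snd p1) + card (snd p2) = m" "card (snd q1) + card (snd q2) = m'"
    using u v \<open>u (p1, p2) \<noteq> 0\<close> \<open>v (q1, q2) \<noteq> 0\<close> unfolding Thomogeneous_def by blast+
  ultimately show "card (snd r1) + card (snd r2) = m + m'"
    using mem by (auto dest!: card_Hcoef_nonzero)
qed

lemma Thomogeneous_Delta_x: "Thomogeneous 1 (Delta_x i)"
  by (auto simp: Thomogeneous_def Delta_x_def Tplus_def Tmono_def split: if_splits)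

lemma Thomogeneous_foldl_Delta_x:
  "Thomogeneous m u \<Longrightarrow> Thomogeneous (m + length xs) (foldl (Tmul n) u (map Delta_x xs))"
proof (induction xs arbitrary: u m)
  case (Cons x xs)
  have "Thomogeneous (m + 1) (Tmul n u (Delta_x x))"
    by (rule Thomogeneous_Tmul[OF Cons.prems Thomogeneous_Delta_x])
  from Cons.IH[OF this] show ?case by simp
qed simp

lemma Thomogeneous_Delta_basis: "Thomogeneous (card S) (Delta_basis n (b, S))"
  using Thomogeneous_foldl_Delta_x[OF Thomogeneous_Tmono[of "(b, {})" "(b, {})" 1],
      where n = n and xs = "sorted_list_of_set S"]
  by (simp add: Delta_basis_eq)

definition central_action :: "(nat \<Rightarrow> 'a::ring_1) \<Rightarrow> hbasis \<Rightarrow> 'a \<Rightarrow> 'a" where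
  "central_action c p a = (if snd p = {} then (if fst p then 0 else a)
      else if card (snd p) = 1 then c (the_elem (snd p)) * a else 0)"

lemma central_action_empty [simp]: "central_action c (b, {}) a = (if b then 0 else a)"
  by (simp add: central_action_def)

lemma central_action_singleton [simp]: "central_action c (b, {i}) a = c i * a"
  by (simp add: central_action_def)

lemma central_action_card_ge2: "2 \<le> card (snd p) \<Longrightarrow> central_action c p a = 0"
  by (auto simp: central_action_def)

lemma central_action_zero [simp]: "central_action c p 0 = 0"
  by (simp add: central_action_def)

lemma central_action_sum: "central_action c p (sum f A) = (\<Sum>x\<in>A. central_action c p (f x))"
  by (simp add: central_action_def sum_distrib_left)

locale scalar_algebra =
  fixes scale :: "'k::field \<Rightarrow> 'a::ring_1 \<Rightarrow> 'a"
  assumes is_algebra: "is_algebra scale"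
begin

lemma scale_add_right: "scale c (x + y) = scale c x + scale c y"
  using is_algebra by (simp add: is_algebra_def)

lemma scale_add_left: "scale (c + d) x = scale c x + scale d x"
  using is_algebra by (simp add: is_algebra_def)

lemma scale_scale: "scale c (scale d x) = scale (c * d) x"
  using is_algebra by (simp add: is_algebra_def)

lemma scale_one [simp]: "scale 1 x = x"
  using is_algebra by (simp add: is_algebra_def)

lemma scale_mult_right: "scale c (x * y) = x * scale c y"
  using is_algebra unfolding is_algebra_def by blast

lemma scale_zero_left [simp]: "scale 0 x = 0"
  using scale_add_left[of 0 0 x] by simp

lemma scale_zero_right [simp]: "scale c 0 = 0"
  using scale_add_right[of c 0 0] by simp

lemma scale_minus_one [simp]: "scale (-1) x = - x"
  using scale_add_left[of "-1" 1 x] by (simp add: eq_neg_iff_add_eq_0)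

lemma scale_sum_left: "scale (sum f A) x = (\<Sum>i\<in>A. scale (f i) x)"
  by (induction A rule: infinite_finite_induct) (auto simp: scale_add_left)

lemma scale_sum_right: "scale c (sum f A) = (\<Sum>i\<in>A. scale c (f i))"
  by (induction A rule: infinite_finite_induct) (auto simp: scale_add_right)

lemma scale_left_commute: "scale c (scale d x) = scale d (scale c x)"
  by (simp add: scale_scale mult.commute)

lemma act_He: "p \<in> Hbasis n \<Longrightarrow> act n scale phi (He p) a = phi p a"
  unfolding act_def by (subst sum_eq_single[of _ p]) (auto simp: finite_Hbasis He_def)

text \<open>Teval n F u applies the bilinear map F to the tensor u; for u = Delta n h it is
  the Sweedler sum of F (h_1, h_2).\<close>

definition Teval :: "nat \<Rightarrow> (hbasis \<Rightarrow> hbasis \<Rightarrow> 'a) \<Rightarrow> (hbasis \<times> hbasis \<Rightarrow> 'k) \<Rightarrow> 'a" where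
  "Teval n F u = (\<Sum>p\<in>Hbasis n. \<Sum>q\<in>Hbasis n. scale (u (p, q)) (F p q))"

lemma Teval_Tplus: "Teval n F (Tplus u v) = Teval n F u + Teval n F v"
  by (simp add: Teval_def Tplus_def scale_add_left sum.distrib)

lemma Teval_Tmono:
  assumes "p \<in> Hbasis n" "q \<in> Hbasis n"
  shows "Teval n F (Tmono c p q) = scale c (F p q)"
  unfolding Teval_def
  by (subst sum_eq_single[of _ p], simp_all add: finite_Hbasis assms Tmono_def,
      subst sum_eq_single[of _ q], simp_all add: finite_Hbasis assms)

lemma Teval_Delta:
  "Teval n F (Delta n h) = (\<Sum>r\<in>Hbasis n. scale (h r) (Teval n F (Delta_basis n r)))"
proof -
  have "Teval n F (Delta n h) = (\<Sum>p\<in>Hbasis n. \<Sum>q\<in>Hbasis n. \<Sum>r\<in>Hbasis n.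
      scale (h r) (scale (Delta_basis n r (p, q)) (F p q)))"
    by (simp add: Teval_def Delta_def scale_sum_left scale_scale)
  also have "\<dots> = (\<Sum>p\<in>Hbasis n. \<Sum>r\<in>Hbasis n. \<Sum>q\<in>Hbasis n.
      scale (h r) (scale (Delta_basis n r (p, q)) (F p q)))"
    by (rule sum.cong[OF refl]) (rule sum.swap)
  also have "\<dots> = (\<Sum>r\<in>Hbasis n. \<Sum>p\<in>Hbasis n. \<Sum>q\<in>Hbasis n.
      scale (h r) (scale (Delta_basis n r (p, q)) (F p q)))"
    by (rule sum.swap)
  also have "\<dots> = (\<Sum>r\<in>Hbasis n. scale (h r) (Teval n F (Delta_basis n r)))"
    by (simp add: Teval_def scale_sum_right)
  finally show ?thesis .
qed

lemma Teval_sum_scale: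
  "Teval n (\<lambda>p q. \<Sum>x\<in>B. scale (k x) (G x p q)) u = (\<Sum>x\<in>B. scale (k x) (Teval n (G x) u))"
proof -
  have "Teval n (\<lambda>p q. \<Sum>x\<in>B. scale (k x) (G x p q)) u = (\<Sum>p\<in>Hbasis n. \<Sum>q\<in>Hbasis n. \<Sum>x\<in>B.
      scale (k x) (scale (u (p, q)) (G x p q)))"
    by (simp add: Teval_def scale_sum_right scale_left_commute)
  also have "\<dots> = (\<Sum>p\<in>Hbasis n. \<Sum>x\<in>B. \<Sum>q\<in>Hbasis n. scale (k x) (scale (u (p, q)) (G x p q)))"
    by (rule sum.cong[OF refl]) (rule sum.swap)
  also have "\<dots> = (\<Sum>x\<in>B. \<Sum>p\<in>Hbasis n. \<Sum>q\<in>Hbasis n. scale (k x) (scale (u (p, q)) (G x p q)))"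
    by (rule sum.swap)
  also have "\<dots> = (\<Sum>x\<in>B. scale (k x) (Teval n (G x) u))"
    by (simp add: Teval_def scale_sum_right)
  finally show ?thesis .
qed

lemma Teval_Thomogeneous_eq_0:
  assumes "Thomogeneous m u" "3 \<le> m"
    and "\<And>p q. p \<in> Hbasis n \<Longrightarrow> q \<in> Hbasis n \<Longrightarrow> 2 \<le> card (snd p) \<or> 2 \<le> card (snd q) \<Longrightarrow> F p q = 0"
  shows "Teval n F u = 0"
  unfolding Teval_def
proof (intro sum.neutral ballI)
  fix p q assume pq: "p \<in> Hbasis n" "q \<in> Hbasis n"
  show "scale (u (p, q)) (F p q) = 0"
  proof (cases "u (p, q) = 0")
    case False
    then have "card (snd p) + card (snd q) = m" using assms(1) unfolding Thomogeneous_def by blast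
    then have "F p q = 0" using assms(2) by (intro assms(3)[OF pq]) linarith
    then show ?thesis by simp
  qed simp
qed

lemma central_action_scale: "central_action c p (scale d x) = scale d (central_action c p x)"
  by (simp add: central_action_def scale_mult_right)

definition central_action_mul :: "(nat \<Rightarrow> 'a) \<Rightarrow> hbasis \<Rightarrow> hbasis \<Rightarrow> 'a \<Rightarrow> 'a" where
  "central_action_mul c q q' a =
    (if snd q \<inter> snd q' = {} then scale (Hmul_sign q q') (central_action c (Hmul_idx q q') a) else 0)"

lemma central_action_mul_eq_0:
  assumes "q \<in> Hbasis n" "q' \<in> Hbasis n" "2 \<le> card (snd q) + card (snd q')"
  shows "central_action_mul c q q' a = 0"
proof (cases "snd q \<inter> snd q' = {}")
  case True
  then have "card (snd (Hmul_idx q q')) = card (snd q) + card (snd q')"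
    using assms by (simp add: Hmul_idx_def card_Un_disjoint finite_snd_Hbasis)
  then show ?thesis using True assms(3) by (simp add: central_action_mul_def central_action_card_ge2)
qed (simp add: central_action_mul_def)

lemma sum_Hcoef_central_action:
  assumes "q \<in> Hbasis n" "q' \<in> Hbasis n"
  shows "(\<Sum>r\<in>Hbasis n. scale (Hcoef q q' r) (central_action c r a)) = central_action_mul c q q' a"
proof (cases "snd q \<inter> snd q' = {}")
  case True
  then show ?thesis
    by (subst sum_eq_single[of _ "Hmul_idx q q'"])
       (auto simp: finite_Hbasis Hmul_idx_Hbasis assms Hcoef_eq central_action_mul_def)
qed (simp add: Hcoef_eq central_action_mul_def)

lemma act_Hmul_He:
  assumes phi: "\<forall>p\<in>Hbasis n. \<forall>a. phi p a = central_action c p a" and q: "q \<in> Hbasis n"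
  shows "act n scale phi (Hmul n (He q) k) a =
    (\<Sum>q'\<in>Hbasis n. scale (k q') (central_action_mul c q q' a))"
proof -
  have "act n scale phi (Hmul n (He q) k) a =
      (\<Sum>r\<in>Hbasis n. \<Sum>q'\<in>Hbasis n. scale (k q') (scale (Hcoef q q' r) (central_action c r a)))"
    unfolding act_def by (intro sum.cong refl) (simp add: phi Hmul_He_left[OF q] scale_sum_left scale_scale)
  also have "\<dots> = (\<Sum>q'\<in>Hbasis n. \<Sum>r\<in>Hbasis n. scale (k q') (scale (Hcoef q q' r) (central_action c r a)))"
    by (rule sum.swap)
  also have "\<dots> = (\<Sum>q'\<in>Hbasis n. scale (k q') (central_action_mul c q q' a))"
    by (intro sum.cong refl) (simp add: scale_sum_right[symmetric] sum_Hcoef_central_action q)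
  finally show ?thesis .
qed

end

locale central_family = scalar_algebra scale for scale :: "'k::field \<Rightarrow> 'a::ring_1 \<Rightarrow> 'a" +
  fixes c :: "nat \<Rightarrow> 'a"
  assumes central: "c i * y = y * c i"
begin

lemma central_mult_mult: "c i * x * (c j * y) = c j * c i * (x * y)"
  by (metis central mult.assoc)

lemma central_left_commute: "c i * (c j * y) = c j * (c i * y)"
  by (metis central mult.assoc)

lemma central_action_mult_basis:
  assumes r: "(b, S) \<in> Hbasis n"
  shows "central_action c (b, S) (x * y) =
    Teval n (\<lambda>p q. central_action c p x * central_action c q y) (Delta_basis n (b, S))"
proof -
  have "finite S" using finite_snd_Hbasis[OF r] by simp
  then show ?thesis
  proof (cases rule: finite_linorder_set_cases_card)
    case 1
    then show ?thesis by (simp add: Delta_basis_empty Teval_Tmono)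
  next
    case (2 i)
    then have "i \<in> {1..<n}" using r by simp
    then have Delta: "Delta_basis n (b, S) =
        Tplus (Tmono 1 (b, {i}) (b, {})) (Tmono 1 (\<not> b, {}) (b, {i}))"
      using 2 by (simp add: Delta_basis_singleton)
    show ?thesis
      unfolding Delta using 2 \<open>i \<in> {1..<n}\<close>
      by (cases b) (simp_all add: Teval_Tplus Teval_Tmono mult.assoc[symmetric] central[of i x])
  next
    case (3 i j)
    then have "i \<in> {1..<n}" "j \<in> {1..<n}" using r by auto
    with 3 show ?thesis
      by (simp add: Delta_basis_doubleton Teval_Tplus Teval_Tmono central_action_card_ge2
          central_mult_mult central[of i "c j"])
  next
    case 4
    have "Teval n (\<lambda>p q. central_action c p x * central_action c q y) (Delta_basis n (b, S)) = 0"
      by (rule Teval_Thomogeneous_eq_0[OF Thomogeneous_Delta_basis 4])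
        (auto simp: central_action_card_ge2)
    with 4 show ?thesis by (simp add: central_action_card_ge2)
  qed
qed

lemma central_action_compose_basis:
  assumes r: "(b, S) \<in> Hbasis n" and q: "(e, Q) \<in> Hbasis n"
  shows "central_action c (b, S) (central_action c (e, Q) a) =
    Teval n (\<lambda>p q. central_action c p 1 * central_action_mul c q (e, Q) a) (Delta_basis n (b, S))"
    (is "_ = Teval n ?F _")
proof -
  have "finite S" "finite Q" using finite_snd_Hbasis[OF r] finite_snd_Hbasis[OF q] by simp_all
  show ?thesis
  proof (cases "2 \<le> card Q")
    case True
    have "?F p q' = 0" if "q' \<in> Hbasis n" for p q'
      using central_action_mul_eq_0[OF that q] True by simp
    with True show ?thesis by (simp add: Teval_def central_action_card_ge2)
  next
    case False
    with \<open>finite Q\<close> have small_Q: "Q = {} \<or> (\<exists>k. Q = {k})"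
      by (cases rule: finite_set_cases_card) auto
    from \<open>finite S\<close> show ?thesis
    proof (cases rule: finite_linorder_set_cases_card)
      case 1
      with small_Q show ?thesis
        by (cases b; cases e; auto simp: Delta_basis_empty Teval_Tmono central_action_mul_def
            Hmul_idx_def Hmul_sign_def)
    next
      case (2 i)
      then have "i \<in> {1..<n}" using r by simp
      with 2 small_Q show ?thesis
        by (cases b; cases e; auto simp: Delta_basis_singleton Teval_Tplus Teval_Tmono
            central_action_mul_def Hmul_idx_def Hmul_sign_def central_action_def)
    next
      case (3 i j)
      then have "i \<in> {1..<n}" "j \<in> {1..<n}" using r by auto
      with 3 small_Q show ?thesis
        by (cases e; auto simp: Delta_basis_doubleton Teval_Tplus Teval_Tmono central_action_mul_def
            Hmul_idx_def Hmul_sign_def central_action_def scale_mult_right[symmetric]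
            central_left_commute)
    next
      case 4
      have "?F p q = 0"
        if "p \<in> Hbasis n" "q \<in> Hbasis n" "2 \<le> card (snd p) \<or> 2 \<le> card (snd q)" for p q
        using that central_action_mul_eq_0[OF that(2) q] by (auto simp: central_action_card_ge2)
      then have "Teval n ?F (Delta_basis n (b, S)) = 0"
        by (rule Teval_Thomogeneous_eq_0[OF Thomogeneous_Delta_basis 4])
      with 4 show ?thesis by (simp add: central_action_card_ge2)
    qed
  qed
qed

lemma act_mult_eq_Delta_sum:
  assumes phi: "\<forall>p\<in>Hbasis n. \<forall>a. phi p a = central_action c p a"
  shows "act n scale phi h (x * y) = (\<Sum>p\<in>Hbasis n. \<Sum>q\<in>Hbasis n.
    scale (Delta n h (p, q)) (act n scale phi (He p) x * act n scale phi (He q) y))"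
proof -
  let ?F = "\<lambda>p q. central_action c p x * central_action c q y"
  have "(\<Sum>p\<in>Hbasis n. \<Sum>q\<in>Hbasis n.
      scale (Delta n h (p, q)) (act n scale phi (He p) x * act n scale phi (He q) y))
      = Teval n ?F (Delta n h)"
    unfolding Teval_def by (intro sum.cong refl) (simp add: act_He phi)
  also have "\<dots> = (\<Sum>r\<in>Hbasis n. scale (h r) (Teval n ?F (Delta_basis n r)))"
    by (rule Teval_Delta)
  also have "\<dots> = act n scale phi h (x * y)"
    unfolding act_def by (intro sum.cong refl) (auto simp: phi central_action_mult_basis)
  finally show ?thesis by simp
qed

lemma act_act_eq_Delta_sum:
  assumes phi: "\<forall>p\<in>Hbasis n. \<forall>a. phi p a = central_action c p a"
  shows "act n scale phi h (act n scale phi k a) = (\<Sum>p\<in>Hbasis n. \<Sum>q\<in>Hbasis n.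
    scale (Delta n h (p, q)) (act n scale phi (He p) 1 * act n scale phi (Hmul n (He q) k) a))"
proof -
  let ?F = "\<lambda>p q. \<Sum>q'\<in>Hbasis n. scale (k q') (central_action c p 1 * central_action_mul c q q' a)"
  have "(\<Sum>p\<in>Hbasis n. \<Sum>q\<in>Hbasis n.
      scale (Delta n h (p, q)) (act n scale phi (He p) 1 * act n scale phi (Hmul n (He q) k) a))
      = Teval n ?F (Delta n h)"
    unfolding Teval_def
    by (intro sum.cong refl)
      (simp add: act_He phi act_Hmul_He[OF phi] sum_distrib_left scale_mult_right)
  also have "\<dots> = (\<Sum>r\<in>Hbasis n. scale (h r) (Teval n ?F (Delta_basis n r)))"
    by (rule Teval_Delta)
  also have "\<dots> = (\<Sum>r\<in>Hbasis n. scale (h r)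
      (\<Sum>q'\<in>Hbasis n. scale (k q') (central_action c r (central_action c q' a))))"
    unfolding Teval_sum_scale
    by (intro sum.cong refl arg_cong[where f = "scale _"]) (auto simp: central_action_compose_basis)
  also have "\<dots> = act n scale phi h (act n scale phi k a)"
    by (simp add: act_def phi central_action_sum central_action_scale)
  finally show ?thesis by simp
qed

lemma partial_action_if_eq_central_action:
  assumes "linear_map_HA n scale phi" and phi: "\<forall>p\<in>Hbasis n. \<forall>a. phi p a = central_action c p a"
  shows "partial_action n scale phi"
  unfolding partial_action_def
  using assms act_mult_eq_Delta_sum[OF phi] act_act_eq_Delta_sum[OF phi]
  by (simp add: Hone_def act_He)

end

lemma (in scalar_algebra) phi_eq_central_action:
  assumes one: "\<forall>a. act n scale phi Hone a = a"
    and g: "\<forall>a. act n scale phi Hg a = 0"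
    and c_eq: "\<forall>i\<in>{1..<n}. act n scale phi (Hx i) 1 = c i"
    and xi: "\<forall>i\<in>{1..<n}. \<forall>a.
              act n scale phi (Hmul n Hg (Hx i)) a = act n scale phi (Hx i) a \<and>
              act n scale phi (Hx i) a = act n scale phi (Hx i) 1 * a"
    and xs: "\<forall>is. length is \<ge> 2 \<longrightarrow> set is \<subseteq> {1..<n} \<longrightarrow> (\<forall>a.
              act n scale phi (Hmul n Hg (Hprod n (map Hx is))) a = act n scale phi (Hprod n (map Hx is)) a \<and>
              act n scale phi (Hprod n (map Hx is)) a = 0)"
    and p: "p \<in> Hbasis n"
  shows "phi p a = central_action c p a"
proof -
  obtain b S where p_eq: "p = (b, S)" by (cases p)
  with p have S: "S \<subseteq> {1..<n}" by simp
  then have "finite S" by (rule finite_subset) simp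
  then have "act n scale phi (He (b, S)) a = central_action c (b, S) a"
  proof (cases rule: finite_set_cases_card)
    case 1
    with one g show ?thesis by (cases b) (simp_all add: Hone_def Hg_def)
  next
    case (2 i)
    with S have i: "i \<in> {1..<n}" by simp
    with xi c_eq have "act n scale phi (Hx i) a = c i * a"
      "act n scale phi (Hmul n Hg (Hx i)) a = act n scale phi (Hx i) a"
      by simp_all
    with 2 i show ?thesis by (cases b) (simp_all add: Hx_def Hmul_Hg_He)
  next
    case 3
    let ?is = "sorted_list_of_set S"
    have "2 \<le> length ?is" "set ?is \<subseteq> {1..<n}" using 3 S \<open>finite S\<close> by simp_all
    with xs have
      "act n scale phi (Hmul n Hg (Hprod n (map Hx ?is))) a = act n scale phi (Hprod n (map Hx ?is)) a"
      "act n scale phi (Hprod n (map Hx ?is)) a = 0"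
      by blast+
    then have "act n scale phi (Hmul n Hg (He (False, S))) a = act n scale phi (He (False, S)) a"
      "act n scale phi (He (False, S)) a = 0"
      unfolding Hprod_sorted_Hx[OF S] .
    then have "act n scale phi (He (b, S)) a = 0"
      by (cases b) (simp_all add: Hmul_Hg_He[OF S])
    with 3 show ?thesis by (simp add: central_action_card_ge2)
  qed
  with p p_eq show ?thesis by (simp add: act_He)
qed

theorem proposition4p4:
  fixes scale :: "'k::field \<Rightarrow> 'a::ring_1 \<Rightarrow> 'a"
    and phi :: "hbasis \<Rightarrow> 'a \<Rightarrow> 'a"
    and n :: nat
  assumes char: "(2::'k) \<noteq> 0"
    and n2: "n \<ge> 2"
    and alg: "is_algebra scale"
    and lin: "linear_map_HA n scale phi"
    and one: "\<forall>a. act n scale phi Hone a = a"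
    and g0: "\<forall>a. act n scale phi Hg a = 0"
    and central: "\<forall>i\<in>{1..<n}. \<forall>y. act n scale phi (Hx i) 1 * y = y * act n scale phi (Hx i) 1"
    and xi: "\<forall>i\<in>{1..<n}. \<forall>a.
              act n scale phi (Hmul n Hg (Hx i)) a = act n scale phi (Hx i) a \<and>
              act n scale phi (Hx i) a = act n scale phi (Hx i) 1 * a"
    and xs: "\<forall>is. length is \<ge> 2 \<longrightarrow> set is \<subseteq> {1..<n} \<longrightarrow> (\<forall>a.
              act n scale phi (Hmul n Hg (Hprod n (map Hx is))) a = act n scale phi (Hprod n (map Hx is)) a \<and>
              act n scale phi (Hprod n (map Hx is)) a = 0)"
  shows "partial_action n scale phi"
proof -
  interpret scalar_algebra scale by unfold_locales (rule alg)
  define c where "c i = (if i \<in> {1..<n} then act n scale phi (Hx i) 1 else 0)" for i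
  interpret central_family scale c
    by unfold_locales (use central in \<open>simp add: c_def\<close>)
  have "\<forall>p\<in>Hbasis n. \<forall>a. phi p a = central_action c p a"
    using phi_eq_central_action[OF one g0 _ xi xs] by (simp add: c_def)
  with lin show ?thesis by (rule partial_action_if_eq_central_action)
qed

end
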